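(* Let $A=\{a_1,a_2,\ldots,a_k\}$ be a set of $k\ge1$ distinct positive integers, let $\tau$ be a permutation of $\{1,2,\ldots,k\}$, and let $A_{\tau(j)}=\{a_{\tau(1)},\ldots,a_{\tau(j)}\}$ for $j=1,\ldots,k$, with $A_{\tau(0)}=\emptyset$. Then the following are equivalent: (a) The elements of $A$ are pairwise co-prime (i.e. every $2$-element subset of $A$ has gcd $1$). (b) \[ 2|A|-1 = \left( 1 + 4 \sum_{d=1}^{\sup A} \mu(d)\, v(A,d)\,(v(A,d)-1) \right)^{1/2}. \] (c) \[ 2|A|-1 = \left( 1 + 8 \sum_{j=1}^k \sum_{d\mid a_{\tau(j)}} \mu(d)\, v(A_{\tau(j-1)},d) \right)^{1/2}. \]
   Context: $\sup A$ is the largest element of $A$. $\mu$ is the Möbius function. For a finite set $X$ of positive integers and a positive integer $d$, $v(X,d)$ is the number of multiples of $d$ in $X$ (so $v(\emptyset,d)=0$). *)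

theory Defs
  imports "HOL-Computational_Algebra.Computational_Algebra" "HOL-Combinatorics.Permutations"
begin

text \<open>Moebius function on positive integers (value at 0 is irrelevant; set to 0).\<close>
definition moebius_mu :: "nat \<Rightarrow> int" where
  "moebius_mu d = (if d = 0 \<or> \<not> squarefree d then 0
                   else (-1) ^ card (prime_factors d))"

definition v :: "nat set \<Rightarrow> nat \<Rightarrow> nat" where
  "v X d = card {x \<in> X. d dvd x}"

end

theory Submission
  imports Defs
begin

text \<open>Since the divisor sum of \<open>\<mu>\<close> is the indicator of 1, \<open>\<Sum>d|n. \<mu>(d) v(X,d)\<close> counts the elements
  of \<open>X\<close> coprime to \<open>n\<close>. Together with \<open>v(A,d) (v(A,d) - 1) = \<Sum>y\<in>A, d|y. v(A - {y}, d)\<close> this shows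
  that the sum in (b) counts the ordered pairs of distinct coprime elements of \<open>A\<close>, while the
  double sum in (c), where \<open>X\<close> consists of the \<open>a(\<tau> i)\<close> with \<open>i < j\<close> and \<open>n = a(\<tau> j)\<close>, counts
  the unordered ones. These counts are at most \<open>k(k - 1)\<close> resp. \<open>k(k - 1)/2\<close>, with equality exactly
  when \<open>A\<close> is pairwise coprime, and \<open>2k - 1 = \<surd>(1 + 4k(k - 1))\<close> turns the equalities into (b)
  and (c).\<close>

lemma moebius_mu_eq_0_if_square_dvd:
  fixes p :: nat
  assumes "prime p" "p\<^sup>2 dvd d"
  shows "moebius_mu d = 0"
proof -
  have "\<not> squarefree d"
    using assms by (intro not_squarefreeI) auto
  then show ?thesis by (simp add: moebius_mu_def)
qed

lemma moebius_mu_prime_mult: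
  fixes p :: nat
  assumes p: "prime p" and "\<not> p dvd d" and "d > 0"
  shows "moebius_mu (p * d) = - moebius_mu d"
proof -
  have "coprime p d" using assms by (simp add: prime_imp_coprime)
  then have squarefree: "squarefree (p * d) \<longleftrightarrow> squarefree d"
    using squarefree_multD[of p d] squarefree_mult_coprime squarefree_prime[OF p] by blast
  have "prime_factors (p * d) = insert p (prime_factors d)"
    using assms prime_factors_product[of p d] prime_prime_factors[OF p] by (auto simp: prime_gt_0_nat)
  moreover have "p \<notin> prime_factors d" using assms by auto
  ultimately have "card (prime_factors (p * d)) = Suc (card (prime_factors d))"
    by simp
  with squarefree assms show ?thesis
    unfolding moebius_mu_def by (auto simp: prime_gt_0_nat)
qed

text \<open>Splitting the divisors by a prime \<open>p\<close> of \<open>m\<close>: those divisible by \<open>p\<^sup>2\<close> contribute nothing,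
  and \<open>d \<mapsto> p d\<close> matches the divisors prime to \<open>p\<close> with the remaining ones, negating \<open>\<mu>\<close>.\<close>

lemma sum_moebius_mu_divisors:
  fixes m :: nat
  assumes "m > 0"
  shows "(\<Sum>d | d dvd m. moebius_mu d) = (if m = 1 then 1 else 0)"
proof (cases "m = 1")
  case True
  then have "{d. d dvd m} = {1}" by auto
  with True show ?thesis by (simp add: moebius_mu_def)
next
  case False
  then obtain p where p: "prime p" "p dvd m"
    using assms by (metis prime_factor_nat)
  define D0 where "D0 = {d. d dvd m \<and> \<not> p dvd d}"
  define D1 where "D1 = {d. d dvd m \<and> p dvd d}"
  have fin: "finite D0" "finite D1"
    using assms unfolding D0_def D1_def by auto
  have support_D1: "{d \<in> D1. moebius_mu d \<noteq> 0} \<subseteq> (\<lambda>d. p * d) ` D0"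
  proof
    fix x assume x: "x \<in> {d \<in> D1. moebius_mu d \<noteq> 0}"
    then obtain d where d: "x = p * d" unfolding D1_def by blast
    have "\<not> p dvd d"
      using x p(1) moebius_mu_eq_0_if_square_dvd[of p x] by (auto simp: d power2_eq_square)
    with x d show "x \<in> (\<lambda>d. p * d) ` D0"
      unfolding D0_def D1_def by (auto dest: dvd_mult_right)
  qed
  have D0_into_D1: "(\<lambda>d. p * d) ` D0 \<subseteq> D1"
    using p unfolding D0_def D1_def by (auto intro: divides_mult prime_imp_coprime)
  have "sum moebius_mu D1 = sum moebius_mu ((\<lambda>d. p * d) ` D0)"
    using fin support_D1 D0_into_D1 by (intro sum.mono_neutral_right) auto
  also have "\<dots> = (\<Sum>d\<in>D0. moebius_mu (p * d))"
    using p(1) by (subst sum.reindex) (auto simp: inj_on_def prime_gt_0_nat)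
  also have "\<dots> = - sum moebius_mu D0"
    unfolding sum_negf[symmetric] using p(1) assms
    by (intro sum.cong) (auto simp: D0_def intro!: moebius_mu_prime_mult)
  finally have "sum moebius_mu D0 + sum moebius_mu D1 = 0" by simp
  moreover have "{d. d dvd m} = D0 \<union> D1" "D0 \<inter> D1 = {}"
    unfolding D0_def D1_def by auto
  ultimately show ?thesis
    using False fin by (simp add: sum.union_disjoint)
qed

lemma sum_moebius_mu_v_eq_card_coprime:
  assumes "finite X" and "n > 0"
  shows "(\<Sum>d | d dvd n. of_int (moebius_mu d) * real (v X d)) = real (card {x \<in> X. coprime x n})"
proof -
  have "(\<Sum>d | d dvd n. of_int (moebius_mu d) * real (v X d))
      = (\<Sum>d | d dvd n. \<Sum>x\<in>X. if d dvd x then of_int (moebius_mu d) else 0)"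
    using assms(1) unfolding v_def
    by (simp add: sum.inter_filter[symmetric] sum_distrib_left if_distrib mult.commute cong: if_cong)
  also have "\<dots> = (\<Sum>x\<in>X. \<Sum>d | d dvd gcd x n. of_int (moebius_mu d))"
    using assms(2) by (subst sum.swap) (simp add: sum.inter_filter[symmetric] conj_commute)
  also have "\<dots> = (\<Sum>x\<in>X. if coprime x n then 1 else 0)"
  proof (rule sum.cong[OF refl])
    fix x
    have "gcd x n > 0" using assms(2) by simp
    show "(\<Sum>d | d dvd gcd x n. of_int (moebius_mu d)) = (if coprime x n then 1 else (0::real))"
      unfolding of_int_sum[symmetric] sum_moebius_mu_divisors[OF \<open>gcd x n > 0\<close>]
      by (simp add: coprime_iff_gcd_eq_1)
  qed
  also have "\<dots> = real (card {x \<in> X. coprime x n})"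
    using assms(1) by (simp add: sum.inter_filter[symmetric])
  finally show ?thesis .
qed

lemma v_mult_v_minus_1:
  assumes "finite A"
  shows "real (v A d) * (real (v A d) - 1) = (\<Sum>y\<in>A. if d dvd y then real (v (A - {y}) d) else 0)"
proof -
  have v_remove: "real (v (A - {y}) d) = real (v A d) - 1" if "y \<in> A" "d dvd y" for y
  proof -
    have "{x \<in> A - {y}. d dvd x} = {x \<in> A. d dvd x} - {y}" by auto
    moreover have "card {x \<in> A. d dvd x} = Suc (card ({x \<in> A. d dvd x} - {y}))"
      using assms that by (intro card.remove) auto
    ultimately show ?thesis unfolding v_def by simp
  qed
  have "(\<Sum>y\<in>A. if d dvd y then real (v (A - {y}) d) else 0)
      = (\<Sum>y \<in> {y \<in> A. d dvd y}. real (v (A - {y}) d))"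
    using assms by (simp add: sum.inter_filter)
  also have "\<dots> = (\<Sum>y \<in> {y \<in> A. d dvd y}. real (v A d) - 1)"
    by (intro sum.cong) (auto simp: v_remove)
  also have "\<dots> = real (v A d) * (real (v A d) - 1)"
    by (simp add: v_def)
  finally show ?thesis by simp
qed

lemma sum_moebius_mu_v_pairs_eq_card_coprime:
  assumes A: "finite A" and "0 \<notin> A"
  shows "(\<Sum>d = 1..Max A. of_int (moebius_mu d) * real (v A d) * (real (v A d) - 1))
       = real (\<Sum>y\<in>A. card {x \<in> A - {y}. coprime x y})"
proof -
  have pos: "y > 0" if "y \<in> A" for y
    using that \<open>0 \<notin> A\<close> by (auto intro: Nat.gr0I)
  have restrict: "(\<Sum>d = 1..Max A. if d dvd y then f d else 0) = (\<Sum>d | d dvd y. f d)"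
    if "y \<in> A" for y and f :: "nat \<Rightarrow> real"
  proof -
    have "{d \<in> {1..Max A}. d dvd y} = {d. d dvd y}"
      using pos[OF that] Max_ge[OF A that] by (auto dest: dvd_imp_le intro: Nat.gr0I)
    then show ?thesis by (simp only: sum.inter_filter[OF finite_atLeastAtMost, symmetric])
  qed
  have "(\<Sum>d = 1..Max A. of_int (moebius_mu d) * real (v A d) * (real (v A d) - 1))
      = (\<Sum>d = 1..Max A. \<Sum>y\<in>A. if d dvd y then of_int (moebius_mu d) * real (v (A - {y}) d) else 0)"
    using A by (simp add: mult.assoc v_mult_v_minus_1 sum_distrib_left if_distrib cong: if_cong)
  also have "\<dots> = (\<Sum>y\<in>A. \<Sum>d | d dvd y. of_int (moebius_mu d) * real (v (A - {y}) d))"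
    by (subst sum.swap, rule sum.cong[OF refl], rule restrict)
  also have "\<dots> = (\<Sum>y\<in>A. real (card {x \<in> A - {y}. coprime x y}))"
    using A pos by (intro sum.cong) (auto simp: sum_moebius_mu_v_eq_card_coprime)
  finally show ?thesis by simp
qed

lemma sum_card_filter_eq_sum_card_iff:
  assumes I: "finite I" and S: "\<And>i. i \<in> I \<Longrightarrow> finite (S i)"
  shows "(\<Sum>i\<in>I. card {x \<in> S i. R i x}) = (\<Sum>i\<in>I. card (S i)) \<longleftrightarrow> (\<forall>i\<in>I. \<forall>x\<in>S i. R i x)"
proof
  assume sums_eq: "(\<Sum>i\<in>I. card {x \<in> S i. R i x}) = (\<Sum>i\<in>I. card (S i))"
  show "\<forall>i\<in>I. \<forall>x\<in>S i. R i x"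
  proof (rule ccontr)
    assume "\<not> (\<forall>i\<in>I. \<forall>x\<in>S i. R i x)"
    then obtain i x where "i \<in> I" "x \<in> S i" "\<not> R i x" by blast
    then have "(\<Sum>i\<in>I. card {x \<in> S i. R i x}) < (\<Sum>i\<in>I. card (S i))"
      using I S by (intro sum_strict_mono_ex1) (auto intro!: card_mono psubset_card_mono)
    with sums_eq show False by simp
  qed
qed (auto intro: sum.cong arg_cong[where f = card])

lemma pairwise_coprime_iff_card_coprime_pairs:
  fixes A :: "nat set"
  assumes "finite A"
  shows "pairwise coprime A \<longleftrightarrow> (\<Sum>y\<in>A. card {x \<in> A - {y}. coprime x y}) = card A * (card A - 1)"
proof -
  have "card A * (card A - 1) = (\<Sum>y\<in>A. card (A - {y}))"
    using assms by simp
  then show ?thesis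
    using assms sum_card_filter_eq_sum_card_iff[of A "\<lambda>y. A - {y}" "\<lambda>y x. coprime x y"]
    unfolding pairwise_def by auto
qed

lemma double_sum_pred: "2 * (\<Sum>j = 1..k. j - 1) = k * (k - 1 :: nat)"
  by (induction k) (auto simp: algebra_simps not_less_eq_eq)

lemma pairwise_image_iff_predecessors:
  fixes b :: "nat \<Rightarrow> 'a" and k :: nat
  assumes "inj_on b {1..k}" "symp R"
  shows "pairwise R (b ` {1..k}) \<longleftrightarrow> (\<forall>j\<in>{1..k}. \<forall>x\<in>b ` {1..j - 1}. R x (b j))"
proof
  assume pairwise: "pairwise R (b ` {1..k})"
  show "\<forall>j\<in>{1..k}. \<forall>x\<in>b ` {1..j - 1}. R x (b j)"
  proof (intro ballI)
    fix j x assume j: "j \<in> {1..k}" and "x \<in> b ` {1..j - 1}"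
    then obtain i where i: "i \<in> {1..j - 1}" "x = b i" by blast
    with j have "i \<in> {1..k}" "i \<noteq> j" by auto
    with j have "b i \<noteq> b j" using inj_onD[OF assms(1)] by blast
    with pairwise i j \<open>i \<in> {1..k}\<close> show "R x (b j)"
      unfolding pairwise_def by blast
  qed
next
  assume pred: "\<forall>j\<in>{1..k}. \<forall>x\<in>b ` {1..j - 1}. R x (b j)"
  have "R (b i) (b j)" if "i \<in> {1..k}" "j \<in> {1..k}" "i \<noteq> j" for i j
  proof (cases "i < j")
    case True
    with pred that show ?thesis by auto
  next
    case False
    with pred that have "R (b j) (b i)" by auto
    with assms(2) show ?thesis by (rule sympD)
  qed
  then show "pairwise R (b ` {1..k})"
    unfolding pairwise_def by blast
qed

lemma pairwise_coprime_iff_card_coprime_predecessors: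
  fixes b :: "nat \<Rightarrow> nat"
  assumes inj: "inj_on b {1..k}"
  shows "pairwise coprime (b ` {1..k})
     \<longleftrightarrow> 2 * (\<Sum>j = 1..k. card {x \<in> b ` {1..j - 1}. coprime x (b j)}) = k * (k - 1)"
proof -
  have card_prefix: "card (b ` {1..j - 1}) = j - 1" if "j \<in> {1..k}" for j
  proof -
    have "inj_on b {1..j - 1}"
      using that by (intro inj_on_subset[OF inj]) auto
    then show ?thesis by (simp add: card_image)
  qed
  have "(\<Sum>j = 1..k. card (b ` {1..j - 1})) = (\<Sum>j = 1..k. j - 1)"
    by (rule sum.cong[OF refl], rule card_prefix)
  then have "k * (k - 1) = 2 * (\<Sum>j = 1..k. card (b ` {1..j - 1}))"
    by (simp only: double_sum_pred)
  then show ?thesis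
    using sum_card_filter_eq_sum_card_iff[of "{1..k}" "\<lambda>j. b ` {1..j - 1}" "\<lambda>j x. coprime x (b j)"]
      pairwise_image_iff_predecessors[OF inj, of coprime]
    by (auto simp: symp_def coprime_commute)
qed

lemma two_mult_minus_1_eq_sqrt_iff:
  assumes "S \<ge> 0" "n \<ge> (1::nat)"
  shows "2 * real n - 1 = sqrt (1 + 4 * S) \<longleftrightarrow> S = real n * (real n - 1)"
proof
  assume "2 * real n - 1 = sqrt (1 + 4 * S)"
  then have "(2 * real n - 1)\<^sup>2 = 1 + 4 * S" using assms by simp
  then show "S = real n * (real n - 1)" by (simp add: algebra_simps power2_eq_square)
next
  assume "S = real n * (real n - 1)"
  then have "1 + 4 * S = (2 * real n - 1)\<^sup>2" by (simp add: algebra_simps power2_eq_square)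
  then show "2 * real n - 1 = sqrt (1 + 4 * S)" using assms by simp
qed

lemma real_mult_pred: "n \<ge> 1 \<Longrightarrow> real (n * (n - 1)) = real n * (real n - 1)"
  by (simp add: of_nat_diff)

lemma pairwise_coprime_iff_sqrt_sum_moebius_v_pairs:
  fixes A :: "nat set"
  assumes A: "finite A" "A \<noteq> {}" "0 \<notin> A"
  shows "pairwise coprime A \<longleftrightarrow> 2 * real (card A) - 1
      = sqrt (1 + 4 * (\<Sum>d = 1..Max A. of_int (moebius_mu d) * real (v A d) * (real (v A d) - 1)))"
proof -
  have card: "card A \<ge> 1" using A by (simp add: Suc_le_eq card_gt_0_iff)
  have "pairwise coprime A
      \<longleftrightarrow> real (\<Sum>y\<in>A. card {x \<in> A - {y}. coprime x y}) = real (card A) * (real (card A) - 1)"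
    unfolding real_mult_pred[OF card, symmetric] of_nat_eq_iff
    by (rule pairwise_coprime_iff_card_coprime_pairs[OF A(1)])
  then show ?thesis
    by (simp only: sum_moebius_mu_v_pairs_eq_card_coprime[OF A(1,3)]
        two_mult_minus_1_eq_sqrt_iff[OF of_nat_0_le_iff card])
qed

lemma pairwise_coprime_iff_sqrt_sum_moebius_v_predecessors:
  fixes b :: "nat \<Rightarrow> nat"
  assumes inj: "inj_on b {1..k}" and k: "k \<ge> 1" and "0 \<notin> b ` {1..k}"
  shows "pairwise coprime (b ` {1..k}) \<longleftrightarrow> 2 * real k - 1
      = sqrt (1 + 8 * (\<Sum>j = 1..k. \<Sum>d | d dvd b j.
                 of_int (moebius_mu d) * real (v (b ` {1..j - 1}) d)))"
proof -
  let ?T = "\<Sum>j = 1..k. card {x \<in> b ` {1..j - 1}. coprime x (b j)}"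
  have pos: "b j > 0" if "j \<in> {1..k}" for j
    using that \<open>0 \<notin> b ` {1..k}\<close> by (auto intro: Nat.gr0I)
  have sum_eq: "(\<Sum>j = 1..k. \<Sum>d | d dvd b j. of_int (moebius_mu d) * real (v (b ` {1..j - 1}) d))
      = real ?T"
    unfolding of_nat_sum using pos by (intro sum.cong) (auto simp: sum_moebius_mu_v_eq_card_coprime)
  have "pairwise coprime (b ` {1..k}) \<longleftrightarrow> real (2 * ?T) = real k * (real k - 1)"
    unfolding real_mult_pred[OF k, symmetric] of_nat_eq_iff
    by (rule pairwise_coprime_iff_card_coprime_predecessors[OF inj])
  moreover have "8 * real ?T = 4 * (2 * real ?T)" and nonneg: "0 \<le> 2 * real ?T"
    by (simp_all del: of_nat_sum)
  ultimately show ?thesis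
    by (simp only: sum_eq two_mult_minus_1_eq_sqrt_iff[OF nonneg k] of_nat_mult of_nat_numeral)
qed

theorem theorem5p5:
  fixes a :: "nat \<Rightarrow> nat" and k :: nat and \<tau> :: "nat \<Rightarrow> nat" and A :: "nat set"
  assumes k: "k \<ge> 1"
    and a_inj: "inj_on a {1..k}"
    and a_pos: "\<And>i. i \<in> {1..k} \<Longrightarrow> a i > 0"
    and A_def: "A = a ` {1..k}"
    and tau: "\<tau> permutes {1..k}"
  shows
    "((\<forall>x\<in>A. \<forall>y\<in>A. x \<noteq> y \<longrightarrow> gcd x y = 1)
      \<longleftrightarrow> 2 * real (card A) - 1
          = sqrt (1 + 4 * (\<Sum>d = 1..Max A. of_int (moebius_mu d) * real (v A d) * (real (v A d) - 1))))
     \<and>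
     ((\<forall>x\<in>A. \<forall>y\<in>A. x \<noteq> y \<longrightarrow> gcd x y = 1)
      \<longleftrightarrow> 2 * real (card A) - 1
          = sqrt (1 + 8 * (\<Sum>j = 1..k. \<Sum>d | d dvd a (\<tau> j).
                 of_int (moebius_mu d) * real (v ((a \<circ> \<tau>) ` {1..j - 1}) d))))"
proof -
  have perm_image: "\<tau> ` {1..k} = {1..k}" using tau by (rule permutes_image)
  have b_inj: "inj_on (a \<circ> \<tau>) {1..k}"
    using comp_inj_on[OF permutes_inj_on[OF tau], of a "{1..k}"] a_inj by (simp only: perm_image)
  have A_b: "A = (a \<circ> \<tau>) ` {1..k}" unfolding A_def image_comp[symmetric] perm_image ..
  have card_A: "card A = k" using a_inj by (simp add: A_def card_image)
  have "finite A" "0 \<notin> A"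
    using a_pos unfolding A_def by (simp, fastforce)
  with card_A k have A: "finite A" "A \<noteq> {}" "0 \<notin> A" by auto
  have coprime_A: "(\<forall>x\<in>A. \<forall>y\<in>A. x \<noteq> y \<longrightarrow> gcd x y = 1) \<longleftrightarrow> pairwise coprime A"
    by (simp add: pairwise_def coprime_iff_gcd_eq_1)
  note part_b = pairwise_coprime_iff_sqrt_sum_moebius_v_pairs[OF A, unfolded card_A]
  note part_c = pairwise_coprime_iff_sqrt_sum_moebius_v_predecessors[OF b_inj k A(3)[unfolded A_b],
      folded A_b, unfolded comp_apply]
  show ?thesis
    unfolding coprime_A card_A comp_apply part_b[symmetric] part_c[symmetric] by simp
qed

end
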